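(* Let $i_1,\dots,i_r$ be integers with $\sum_{s=1}^r i_s=1$ and let $\mathbf{m}=(m_1,\dots,m_r)\in\mathbb{Z}^r$ with $\sum_{s=1}^r m_s=0$. Put $k_s=i_s+m_s(q-1)$ and let $\phi^{\mathbf m}:A\to K\{\tau\}$ be determined by $$\phi^{\mathbf m}_t=(-1)^{r-1}\,(\tau-(-t)^{k_r})(\tau-(-t)^{k_{r-1}})\cdots(\tau-(-t)^{k_1}).$$ Then $\phi^{\mathbf m}$ is a rank-$r$ Drinfeld module over $K$ with $[\phi^{\mathbf m}]\in\mathscr{D}(K,r,t)$, and its mod $t$ representation $\bar\rho_{\phi^{\mathbf m},t}$ is isomorphic to an upper triangular representation with diagonal characters $\chi_t^{i_1},\chi_t^{i_2},\dots,\chi_t^{i_r}$ (in this order).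
   Context: $p$ prime, $q$ a power of $p$, $A=\mathbb{F}_q[t]$, $F=\mathbb{F}_q(t)$, $K$ a finite extension of $F$, $r\ge1$. $K\{\tau\}$ is the twisted polynomial ring with $\tau c=c^q\tau$. A rank-$r$ Drinfeld module over $K$ is an $\mathbb{F}_q$-algebra homomorphism $\phi:A\to K\{\tau\}$ with $\phi_t=t+c_1\tau+\cdots+c_r\tau^r$, $c_r\ne0$; isomorphisms are $\psi_a=c\phi_ac^{-1}$. For monic irreducible $\pi$, $\mathbb{F}_\pi=A/\pi A$, $q_\pi=\#\mathbb{F}_\pi$; $\phi[\pi]=\{\lambda\in K^{\rm sep}:\phi_\pi(\lambda)=0\}$ gives $\bar\rho_{\phi,\pi}:G_K\to\mathrm{GL}_r(\mathbb{F}_\pi)$. Good reduction at finite $v$: isomorphic over $K_v$ to $\psi$ with $\psi_t=t+\sum c_i'\tau^i$, $c_i'\in\mathcal{O}_{K_v}$, $c_r'\in\mathcal{O}_{K_v}^\times$. Carlitz module $\mathcal{C}_t=t+\tau$, mod $\pi$ Carlitz character $\chi_\pi:G_K\to\mathrm{Aut}(\mathcal{C}[\pi])=\mathbb{F}_\pi^\times$ (here $\pi=t$, $\mathbb{F}_t=\mathbb{F}_q$). $\mathscr{D}(K,r,\pi)$: $K$-isomorphism classes of rank-$r$ $\phi$ with (D1) good reduction at all finite places not above $\pi$, (D2) $\bar\rho_{\phi,\pi}$ isomorphic to upper triangular with diagonal $\chi_\pi^{j_1},\dots,\chi_\pi^{j_r}$ for some $0\le j_s\le q_\pi-1$. *)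

theory Defs
  imports "HOL-Computational_Algebra.Polynomial"
begin

text \<open>All fields live inside one algebraically closed field of
type 'l, which is an algebraic closure of K. F_q is the set of roots of x^q = x,
A = F_q[t], F = F_q(t) is generated by t over F_q, and K is a finite extension of F
inside 'l.\<close>

definition Fq :: "nat \<Rightarrow> 'l::field set" where
  "Fq q = {x. x ^ q = x}"

definition subfield :: "'l::field set \<Rightarrow> bool" where
  "subfield K \<longleftrightarrow> 0 \<in> K \<and> 1 \<in> K \<and>
     (\<forall>x\<in>K. \<forall>y\<in>K. x + y \<in> K \<and> x - y \<in> K \<and> x * y \<in> K) \<and>
     (\<forall>x\<in>K. x \<noteq> 0 \<longrightarrow> inverse x \<in> K)"

definition alg_closed :: "'l::field itself \<Rightarrow> bool" where
  "alg_closed _ \<longleftrightarrow> (\<forall>f :: 'l poly. degree f \<ge> 1 \<longrightarrow> (\<exists>x. poly f x = 0))"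

definition algebraic_over :: "'l::field set \<Rightarrow> bool" where
  "algebraic_over K \<longleftrightarrow>
     (\<forall>x::'l. \<exists>f. f \<noteq> 0 \<and> (\<forall>j. coeff f j \<in> K) \<and> poly f x = 0)"

definition Ffield :: "nat \<Rightarrow> 'l::field \<Rightarrow> 'l set" where
  "Ffield q t = {poly a t / poly b t | a b.
      (\<forall>j. coeff a j \<in> Fq q) \<and> (\<forall>j. coeff b j \<in> Fq q) \<and> poly b t \<noteq> 0}"

definition function_field_setting :: "'l::field set \<Rightarrow> 'l \<Rightarrow> nat \<Rightarrow> nat \<Rightarrow> bool" where
  "function_field_setting K t p q \<longleftrightarrow>
     prime p \<and> (\<exists>n\<ge>1. q = p ^ n) \<and> CHAR('l) = p \<and>
     alg_closed TYPE('l) \<and> algebraic_over K \<and>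
     subfield K \<and> Fq q \<subseteq> K \<and> t \<in> K \<and>
     (\<forall>f. (\<forall>j. coeff f j \<in> Fq q) \<and> poly f t = 0 \<longrightarrow> f = 0) \<and>
     (\<exists>B. finite B \<and> B \<subseteq> K \<and>
        (\<forall>x\<in>K. \<exists>c. (\<forall>b\<in>B. c b \<in> Ffield q t) \<and> x = (\<Sum>b\<in>B. c b * b)))"

text \<open>Twisted polynomials K{tau}: coefficient sequences nat => 'l, with
tau c = c^q tau, so (a tau^i)(b tau^j) = a b^(q^i) tau^(i+j).\<close>

definition tw_mult :: "nat \<Rightarrow> (nat \<Rightarrow> 'l::field) \<Rightarrow> (nat \<Rightarrow> 'l) \<Rightarrow> nat \<Rightarrow> 'l" where
  "tw_mult q f g = (\<lambda>n. \<Sum>i\<le>n. f i * (g (n - i)) ^ (q ^ i))"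

definition tw_one :: "nat \<Rightarrow> 'l::field" where
  "tw_one = (\<lambda>n. if n = 0 then 1 else 0)"

definition tw_lin :: "'l::field \<Rightarrow> nat \<Rightarrow> 'l" where
  "tw_lin a = (\<lambda>n. if n = 0 then - a else if n = 1 then 1 else 0)"

fun tw_prod :: "nat \<Rightarrow> (nat \<Rightarrow> 'l::field) \<Rightarrow> nat \<Rightarrow> nat \<Rightarrow> 'l" where
  "tw_prod q a 0 = tw_one"
| "tw_prod q a (Suc s) = tw_mult q (tw_lin (a (Suc s))) (tw_prod q a s)"

definition phi_m :: "nat \<Rightarrow> 'l::field \<Rightarrow> nat \<Rightarrow> (nat \<Rightarrow> int) \<Rightarrow> (nat \<Rightarrow> int) \<Rightarrow> nat \<Rightarrow> 'l" where
  "phi_m q t r i m = (\<lambda>n. (-1) ^ (r - 1) *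
      tw_prod q (\<lambda>s. (- t) powi (i s + m s * (int q - 1))) r n)"

text \<open>A rank-r Drinfeld module over K, given by phi_t = t + c_1 tau + ... + c_r tau^r.\<close>
definition drinfeld_module :: "'l::field set \<Rightarrow> 'l \<Rightarrow> nat \<Rightarrow> (nat \<Rightarrow> 'l) \<Rightarrow> bool" where
  "drinfeld_module K t r phi \<longleftrightarrow>
     (\<forall>j. phi j \<in> K) \<and> phi 0 = t \<and> phi r \<noteq> 0 \<and> (\<forall>j>r. phi j = 0)"

definition discrete_val :: "'l::field set \<Rightarrow> ('l \<Rightarrow> int) \<Rightarrow> bool" where
  "discrete_val K v \<longleftrightarrow>
     (\<forall>x\<in>K-{0}. \<forall>y\<in>K-{0}. v (x * y) = v x + v y) \<and>
     (\<forall>x\<in>K-{0}. \<forall>y\<in>K-{0}. x + y \<noteq> 0 \<longrightarrow> v (x + y) \<ge> min (v x) (v y)) \<and>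
     v ` (K - {0}) = UNIV"

text \<open>Finite places: those lying over a prime of A = F_q[t], i.e. v(t) >= 0;
such a place lies above t iff v(t) > 0.\<close>
definition finite_place :: "'l::field set \<Rightarrow> 'l \<Rightarrow> ('l \<Rightarrow> int) \<Rightarrow> bool" where
  "finite_place K t v \<longleftrightarrow> discrete_val K v \<and> v t \<ge> 0"

definition above_t :: "'l::field \<Rightarrow> ('l \<Rightarrow> int) \<Rightarrow> bool" where
  "above_t t v \<longleftrightarrow> v t > 0"

definition integral_at :: "('l::field \<Rightarrow> int) \<Rightarrow> 'l \<Rightarrow> bool" where
  "integral_at v x \<longleftrightarrow> x = 0 \<or> v x \<ge> 0"

definition unit_at :: "('l::field \<Rightarrow> int) \<Rightarrow> 'l \<Rightarrow> bool" where
  "unit_at v x \<longleftrightarrow> x \<noteq> 0 \<and> v x = 0"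

text \<open>Good reduction at v: phi is isomorphic (psi_t = c phi_t c^-1) to a psi with
integral coefficients and unit leading coefficient.\<close>
definition good_reduction :: "'l::field set \<Rightarrow> nat \<Rightarrow> nat \<Rightarrow> (nat \<Rightarrow> 'l) \<Rightarrow> ('l \<Rightarrow> int) \<Rightarrow> bool" where
  "good_reduction K q r phi v \<longleftrightarrow>
     (\<exists>c\<in>K. c \<noteq> 0 \<and>
        (\<forall>j\<in>{1..r}. integral_at v (c * phi j * (inverse c) ^ (q ^ j))) \<and>
        unit_at v (c * phi r * (inverse c) ^ (q ^ r)))"

definition D1 :: "'l::field set \<Rightarrow> 'l \<Rightarrow> nat \<Rightarrow> nat \<Rightarrow> (nat \<Rightarrow> 'l) \<Rightarrow> bool" where
  "D1 K t q r phi \<longleftrightarrow>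
     (\<forall>v. finite_place K t v \<and> \<not> above_t t v \<longrightarrow> good_reduction K q r phi v)"

text \<open>Absolute Galois group, realised as Aut('l / K) ('l an algebraic closure of K).\<close>
definition galois_group :: "'l::field set \<Rightarrow> ('l \<Rightarrow> 'l) set" where
  "galois_group K = {\<sigma>. bij \<sigma> \<and> (\<forall>x y. \<sigma> (x + y) = \<sigma> x + \<sigma> y \<and> \<sigma> (x * y) = \<sigma> x * \<sigma> y)
                         \<and> (\<forall>x\<in>K. \<sigma> x = x)}"

definition torsion :: "nat \<Rightarrow> nat \<Rightarrow> (nat \<Rightarrow> 'l::field) \<Rightarrow> 'l set" where
  "torsion q r phi = {x. (\<Sum>j\<le>r. phi j * x ^ (q ^ j)) = 0}"

text \<open>Mod t Carlitz character: sigma acts on C[t] = {x. t x + x^q = 0} by a scalar in F_q.\<close>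
definition carlitz_char :: "'l::field \<Rightarrow> nat \<Rightarrow> ('l \<Rightarrow> 'l) \<Rightarrow> 'l" where
  "carlitz_char t q \<sigma> =
     (THE w. w \<in> Fq q \<and> (\<forall>x. t * x + x ^ q = 0 \<longrightarrow> \<sigma> x = w * x))"

text \<open>rho_{phi,t} is isomorphic to an upper triangular representation with diagonal
characters chi^(d 1), ..., chi^(d r): there is an F_q-basis e_1..e_r of phi[t] such that
sigma(e_s) = chi(sigma)^(d s) e_s + (F_q-combination of e_1..e_(s-1)).\<close>
definition upper_tri_rep :: "'l::field set \<Rightarrow> 'l \<Rightarrow> nat \<Rightarrow> nat \<Rightarrow> (nat \<Rightarrow> 'l) \<Rightarrow> (nat \<Rightarrow> int) \<Rightarrow> bool" where
  "upper_tri_rep K t q r phi d \<longleftrightarrow>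
     (\<exists>e :: nat \<Rightarrow> 'l.
        (\<forall>x. x \<in> torsion q r phi \<longleftrightarrow>
              (\<exists>c. (\<forall>u\<in>{1..r}. c u \<in> Fq q) \<and> x = (\<Sum>u=1..r. c u * e u))) \<and>
        (\<forall>c. (\<forall>u\<in>{1..r}. c u \<in> Fq q) \<and> (\<Sum>u=1..r. c u * e u) = 0 \<longrightarrow>
              (\<forall>u\<in>{1..r}. c u = 0)) \<and>
        (\<forall>\<sigma>\<in>galois_group K. \<forall>s\<in>{1..r}. \<exists>c. (\<forall>u. c u \<in> Fq q) \<and>
              \<sigma> (e s) = (carlitz_char t q \<sigma>) powi (d s) * e s + (\<Sum>u\<in>{1..<s}. c u * e u)))"

definition D2 :: "'l::field set \<Rightarrow> 'l \<Rightarrow> nat \<Rightarrow> nat \<Rightarrow> (nat \<Rightarrow> 'l) \<Rightarrow> bool" where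
  "D2 K t q r phi \<longleftrightarrow>
     (\<exists>j :: nat \<Rightarrow> nat. (\<forall>s\<in>{1..r}. j s \<le> q - 1) \<and>
        upper_tri_rep K t q r phi (\<lambda>s. int (j s)))"

text \<open>[phi] in D(K, r, t): a rank-r Drinfeld module satisfying (D1) and (D2)
(both conditions are invariant under K-isomorphism).\<close>
definition in_D :: "'l::field set \<Rightarrow> 'l \<Rightarrow> nat \<Rightarrow> nat \<Rightarrow> (nat \<Rightarrow> 'l) \<Rightarrow> bool" where
  "in_D K t q r phi \<longleftrightarrow> drinfeld_module K t r phi \<and> D1 K t q r phi \<and> D2 K t q r phi"

end

theory Submission
  imports Defs "HOL-Computational_Algebra.Primes"
begin

text \<open>Write \<open>a\<^sub>u = (-t)^(k\<^sub>u)\<close>. The coefficients of \<open>\<phi>\<^sub>t\<close> are integer polynomials in the \<open>a\<^sub>u\<close>,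
with leading coefficient \<open>\<plusminus>1\<close> and constant coefficient \<open>\<plusminus>\<Prod> a\<^sub>u = t\<close> (as \<open>\<Sum> k\<^sub>u = 1\<close>); the \<open>a\<^sub>u\<close>
are units at every finite place not above \<open>t\<close>, so \<open>\<phi>\<close> has good reduction there.
Evaluating the factors one at a time, \<open>\<phi>[t]\<close> is the kernel of \<open>E\<^sub>r\<close>, where \<open>E\<^sub>0 x = x\<close> and
\<open>E\<^sub>u x = (E\<^sub>u\<^sub>-\<^sub>1 x)^q - a\<^sub>u E\<^sub>u\<^sub>-\<^sub>1 x\<close>. The map \<open>E\<^sub>u\<^sub>-\<^sub>1\<close> sends \<open>ker E\<^sub>u\<close> onto the \<open>\<bbbF>\<^sub>q\<close>-line of
roots of \<open>y^q = a\<^sub>u y\<close>, spanned by \<open>\<mu>\<^sub>u = L^(i\<^sub>u) (-t)^(m\<^sub>u)\<close>, where \<open>L^(q-1) = -t\<close> makes \<open>L\<close> a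
nonzero Carlitz \<open>t\<close>-torsion point. Choosing \<open>e\<^sub>u\<close> with \<open>E\<^sub>u\<^sub>-\<^sub>1 e\<^sub>u = \<mu>\<^sub>u\<close> gives a basis of
\<open>\<phi>[t]\<close> adapted to the flag \<open>ker E\<^sub>1 \<subseteq> \<dots> \<subseteq> ker E\<^sub>r\<close>, and since \<open>\<sigma> \<mu>\<^sub>u = \<chi>(\<sigma>)^(i\<^sub>u) \<mu>\<^sub>u\<close> the
Galois action on it is upper triangular with diagonal \<open>\<chi>^(i\<^sub>1), \<dots>, \<chi>^(i\<^sub>r)\<close>. As \<open>\<chi>\<close> takes values
in \<open>\<bbbF>\<^sub>q\<^sup>\<times>\<close>, the exponents only matter modulo \<open>q - 1\<close>, which gives (D2).\<close>

section \<open>Coefficients of the twisted product\<close>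

lemma tw_prod_Suc_coeff:
  "tw_prod q a (Suc s) k =
     - a (Suc s) * tw_prod q a s k + (if k = 0 then 0 else tw_prod q a s (k - 1) ^ q)"
proof (cases k)
  case 0
  then show ?thesis by (simp add: tw_mult_def tw_lin_def)
next
  case (Suc k')
  have "tw_prod q a (Suc s) k =
      (\<Sum>i\<le>Suc k'. tw_lin (a (Suc s)) i * tw_prod q a s (Suc k' - i) ^ q ^ i)"
    by (simp add: tw_mult_def Suc)
  also have "\<dots> = - a (Suc s) * tw_prod q a s k +
      (\<Sum>i\<le>k'. tw_lin (a (Suc s)) (Suc i) * tw_prod q a s (k' - i) ^ q ^ Suc i)"
    by (subst sum.atMost_Suc_shift) (simp add: tw_lin_def Suc)
  also have "(\<Sum>i\<le>k'. tw_lin (a (Suc s)) (Suc i) * tw_prod q a s (k' - i) ^ q ^ Suc i) =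
      (\<Sum>i\<le>k'. if i = 0 then tw_prod q a s k' ^ q else 0)"
    by (rule sum.cong) (auto simp: tw_lin_def)
  finally show ?thesis by (simp add: Suc)
qed

declare tw_prod.simps(2) [simp del]

lemma tw_prod_coeff_above: "q > 0 \<Longrightarrow> s < k \<Longrightarrow> tw_prod q a s k = 0"
  by (induction s arbitrary: k) (simp_all add: tw_one_def tw_prod_Suc_coeff)

lemma tw_prod_coeff_top: "q > 0 \<Longrightarrow> tw_prod q a s s = 1"
  by (induction s) (simp_all add: tw_one_def tw_prod_Suc_coeff tw_prod_coeff_above)

lemma tw_prod_coeff_0: "tw_prod q a s 0 = (\<Prod>u=1..s. - a u)"
  by (induction s) (simp_all add: tw_one_def tw_prod_Suc_coeff prod.nat_ivl_Suc' mult.commute)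

definition ring_closed :: "'a::comm_ring_1 set \<Rightarrow> bool" where
  "ring_closed S \<longleftrightarrow> 0 \<in> S \<and> 1 \<in> S \<and> (\<forall>x\<in>S. \<forall>y\<in>S. x + y \<in> S \<and> x * y \<in> S \<and> - x \<in> S)"

lemma ring_closedD:
  assumes "ring_closed S"
  shows "0 \<in> S" "1 \<in> S" "x \<in> S \<Longrightarrow> y \<in> S \<Longrightarrow> x + y \<in> S"
    "x \<in> S \<Longrightarrow> y \<in> S \<Longrightarrow> x * y \<in> S" "x \<in> S \<Longrightarrow> - x \<in> S"
  using assms by (auto simp: ring_closed_def)

lemma ring_closed_power: "ring_closed S \<Longrightarrow> x \<in> S \<Longrightarrow> x ^ n \<in> S"
  by (induction n) (auto simp: ring_closed_def)

lemma tw_prod_coeff_in_ring_closed: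
  assumes S: "ring_closed S" and a: "\<And>u. a u \<in> S"
  shows "tw_prod q a s k \<in> S"
proof (induction s arbitrary: k)
  case 0
  show ?case by (simp add: tw_one_def ring_closedD[OF S])
next
  case (Suc s)
  have "- a (Suc s) * tw_prod q a s k \<in> S"
    by (intro ring_closedD(4,5)[OF S] a Suc.IH)
  moreover have "(if k = 0 then 0 else tw_prod q a s (k - 1) ^ q) \<in> S"
    using ring_closedD(1)[OF S] ring_closed_power[OF S Suc.IH] by simp
  ultimately show ?case
    unfolding tw_prod_Suc_coeff by (rule ring_closedD(3)[OF S])
qed

lemma subfield_ring_closed: "subfield K \<Longrightarrow> ring_closed K"
  unfolding subfield_def ring_closed_def by (metis diff_0)

lemma subfield_power_int:
  assumes "subfield K" "x \<in> K"
  shows "x powi k \<in> K"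
proof -
  have "inverse x \<in> K" using assms by (cases "x = 0") (auto simp: subfield_def)
  then show ?thesis
    using assms(2) ring_closed_power[OF subfield_ring_closed[OF assms(1)]] by (simp add: power_int_def)
qed

definition frobenius_additive :: "nat \<Rightarrow> 'l::field itself \<Rightarrow> bool" where
  "frobenius_additive q _ \<longleftrightarrow> q > 1 \<and> (\<forall>x y :: 'l. (x + y) ^ q = x ^ q + y ^ q)"

lemma function_field_setting_q_gt_1:
  fixes K :: "'l::field set"
  assumes "function_field_setting K t p q"
  shows "q > 1"
proof -
  obtain n where p: "prime p" and n: "n \<ge> 1" "q = p ^ n"
    using assms unfolding function_field_setting_def by blast
  show ?thesis using one_less_power[OF prime_gt_1_nat[OF p], of n] n by simp
qed

lemma function_field_setting_frobenius_additive:
  fixes K :: "'l::field set"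
  assumes "function_field_setting K t p q"
  shows "frobenius_additive q TYPE('l)"
proof -
  obtain n where "prime p" "q = p ^ n" "CHAR('l) = p"
    using assms unfolding function_field_setting_def by blast
  then show ?thesis
    unfolding frobenius_additive_def
    using function_field_setting_q_gt_1[OF assms] freshmans_dream' by auto
qed

context
  fixes q :: nat
  assumes frob: "frobenius_additive q TYPE('l::field)"
begin

lemma frobenius_add: "((x::'l) + y) ^ q = x ^ q + y ^ q"
  using frob by (simp add: frobenius_additive_def)

lemma frobenius_sum: "(\<Sum>i\<in>A. f i :: 'l) ^ q = (\<Sum>i\<in>A. f i ^ q)"
  using frob by (induction A rule: infinite_finite_induct) (auto simp: frobenius_additive_def frobenius_add)

lemma Fq_zero: "(0::'l) \<in> Fq q"
  using frob by (simp add: Fq_def frobenius_additive_def)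

end

lemma function_field_setting_t_nonzero:
  fixes K :: "'l::field set"
  assumes setting: "function_field_setting K t p q"
  shows "t \<noteq> 0"
proof
  assume "t = 0"
  have "\<forall>j. coeff [:0, 1::'l:] j \<in> Fq q"
    using Fq_zero[OF function_field_setting_frobenius_additive[OF setting]]
    by (auto simp: coeff_pCons Fq_def split: nat.split)
  then have "[:0, 1::'l:] = 0"
    using setting \<open>t = 0\<close> unfolding function_field_setting_def by auto
  then show False by simp
qed

lemma Fq_power_int:
  assumes "(x::'l::field) \<in> Fq q"
  shows "x powi k \<in> Fq q"
proof -
  have "(x powi k) ^ q = (x ^ q) powi k"
    by (simp add: power_int_power' power_int_power mult.commute)
  then show ?thesis using assms by (simp add: Fq_def)
qed

lemma power_eq_power_pred_mult: "q \<ge> 1 \<Longrightarrow> (x::'a::monoid_mult) ^ q = x ^ (q - 1) * x"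
  by (cases q) (simp_all add: power_commutes)

lemma Fq_power_pred:
  assumes "w \<in> Fq q" "w \<noteq> 0" "q \<ge> 1"
  shows "w ^ (q - 1) = (1::'l::field)"
  using assms power_eq_power_pred_mult[OF assms(3), of w] by (simp add: Fq_def)

lemma prod_power_int: "(x::'a::field) \<noteq> 0 \<Longrightarrow> (\<Prod>u\<in>A. x powi f u) = x powi (\<Sum>u\<in>A. f u)"
  by (induction A rule: infinite_finite_induct) (simp_all add: power_int_add)

lemma power_int_eq_if_dvd_diff:
  assumes "(w::'l::field) \<noteq> 0" "w ^ n = 1" "int n dvd d - i"
  shows "w powi d = w powi i"
proof -
  obtain k where "d = i + int n * k" using assms(3) by (metis add_diff_cancel_left' dvdE diff_add_cancel)
  then have "w powi d = w powi i * (w ^ n) powi k"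
    using assms(1) by (simp add: power_int_add power_int_power)
  then show ?thesis using assms(2) by simp
qed

lemma roots_of_power_eq_mult_self:
  assumes "(\<mu>::'l::field) \<noteq> 0" "\<mu> ^ q = a * \<mu>"
  shows "y ^ q = a * y \<longleftrightarrow> (\<exists>c\<in>Fq q. y = c * \<mu>)"
proof
  assume y: "y ^ q = a * y"
  have "a \<noteq> 0" using assms by auto
  then have "y / \<mu> \<in> Fq q" using assms by (simp add: Fq_def power_divide y)
  then show "\<exists>c\<in>Fq q. y = c * \<mu>" using assms(1) by (intro bexI[of _ "y / \<mu>"]) auto
next
  assume "\<exists>c\<in>Fq q. y = c * \<mu>"
  then show "y ^ q = a * y" using assms(2) by (auto simp: Fq_def power_mult_distrib)
qed

lemma alg_closed_ex_power_eq_poly: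
  assumes "alg_closed TYPE('l::field)" "degree g < n"
  shows "\<exists>x::'l. x ^ n = poly g x"
proof -
  have "degree (monom 1 n + - g) = n"
    using assms(2) by (subst degree_add_eq_left) (simp_all add: degree_monom_eq)
  moreover have "n \<ge> 1" using assms(2) by simp
  ultimately obtain x where "poly (monom 1 n + - g) x = 0"
    using assms(1) unfolding alg_closed_def by metis
  then show ?thesis by (auto simp: poly_monom)
qed

section \<open>The additive map of the twisted product\<close>

text \<open>The map \<open>x \<mapsto> \<Sum>\<^sub>j c\<^sub>j x^(q^j)\<close> of \<open>(\<tau> - a\<^sub>s) \<cdots> (\<tau> - a\<^sub>1)\<close>, computed factor by factor.\<close>

fun tw_prod_eval :: "nat \<Rightarrow> (nat \<Rightarrow> 'l::field) \<Rightarrow> nat \<Rightarrow> 'l \<Rightarrow> 'l" where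
  "tw_prod_eval q a 0 x = x"
| "tw_prod_eval q a (Suc s) x = tw_prod_eval q a s x ^ q - a (Suc s) * tw_prod_eval q a s x"

lemma sum_tw_prod_eq_tw_prod_eval:
  assumes frob: "frobenius_additive q TYPE('l::field)" and "s \<le> N"
  shows "(\<Sum>j\<le>N. tw_prod q a s j * (x::'l) ^ q ^ j) = tw_prod_eval q a s x"
  using assms(2)
proof (induction s arbitrary: N)
  case 0
  have "(\<Sum>j\<le>N. tw_prod q a 0 j * x ^ q ^ j) = (\<Sum>j\<le>N. if j = 0 then x else 0)"
    by (rule sum.cong) (auto simp: tw_one_def)
  then show ?case by simp
next
  case (Suc s)
  obtain N' where N: "N = Suc N'" and N': "s \<le> N'" using Suc.prems by (cases N) auto
  have "(\<Sum>j\<le>N. tw_prod q a (Suc s) j * x ^ q ^ j) =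
      (\<Sum>j\<le>N. (if j = 0 then 0 else tw_prod q a s (j - 1) ^ q) * x ^ q ^ j) -
      a (Suc s) * (\<Sum>j\<le>N. tw_prod q a s j * x ^ q ^ j)"
    by (simp add: tw_prod_Suc_coeff sum_subtractf sum_distrib_left algebra_simps)
  also have "(\<Sum>j\<le>N. (if j = 0 then 0 else tw_prod q a s (j - 1) ^ q) * x ^ q ^ j) =
      (\<Sum>j\<le>N'. (tw_prod q a s j * x ^ q ^ j) ^ q)"
    unfolding N by (subst sum.atMost_Suc_shift)
      (simp add: power_mult_distrib mult.commute flip: power_mult)
  also have "\<dots> = tw_prod_eval q a s x ^ q"
    by (subst frobenius_sum[OF frob, symmetric]) (simp only: Suc.IH[OF N'])
  finally show ?case using Suc by simp
qed

context
  fixes q :: nat and a :: "nat \<Rightarrow> 'l::field"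
  assumes frob: "frobenius_additive q TYPE('l)"
begin

lemma tw_prod_eval_add: "tw_prod_eval q a s (x + y) = tw_prod_eval q a s x + tw_prod_eval q a s y"
  by (induction s) (simp_all add: frobenius_add[OF frob] algebra_simps)

lemma tw_prod_eval_diff: "tw_prod_eval q a s (x - y) = tw_prod_eval q a s x - tw_prod_eval q a s y"
  using tw_prod_eval_add[of s "x - y" y] by simp

lemma tw_prod_eval_0: "tw_prod_eval q a s 0 = 0"
  using tw_prod_eval_diff[of s 0 0] by simp

end

lemma tw_prod_eval_scale: "c \<in> Fq q \<Longrightarrow> tw_prod_eval q a s (c * x) = c * tw_prod_eval q a s x"
  by (induction s) (simp_all add: Fq_def algebra_simps)

lemma tw_prod_eval_surj:
  assumes "alg_closed TYPE('l::field)" "q > 1"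
  shows "\<exists>x. tw_prod_eval q a s x = (y::'l)"
proof (induction s arbitrary: y)
  case 0
  show ?case by simp
next
  case (Suc s)
  have "degree [:y, a (Suc s):] < q"
    using assms(2) degree_pCons_le[of y "[:a (Suc s):]"] by simp
  then obtain z where "z ^ q = poly [:y, a (Suc s):] z"
    using alg_closed_ex_power_eq_poly[OF assms(1)] by blast
  moreover obtain x where "tw_prod_eval q a s x = z" using Suc.IH by blast
  ultimately show ?case by (intro exI[of _ x]) (simp add: algebra_simps)
qed

section \<open>A basis of the torsion adapted to the flag of kernels\<close>

definition root_lifts :: "nat \<Rightarrow> (nat \<Rightarrow> 'l::field) \<Rightarrow> (nat \<Rightarrow> 'l) \<Rightarrow> (nat \<Rightarrow> 'l) \<Rightarrow> nat \<Rightarrow> bool" where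
  "root_lifts q a \<mu> e s \<longleftrightarrow> (\<forall>u\<in>{1..s}.
     \<mu> u \<noteq> 0 \<and> \<mu> u ^ q = a u * \<mu> u \<and> tw_prod_eval q a (u - 1) (e u) = \<mu> u)"

lemma root_lifts_Suc:
  "root_lifts q a \<mu> e (Suc s) \<longleftrightarrow> root_lifts q a \<mu> e s \<and>
     \<mu> (Suc s) \<noteq> 0 \<and> \<mu> (Suc s) ^ q = a (Suc s) * \<mu> (Suc s) \<and> tw_prod_eval q a s (e (Suc s)) = \<mu> (Suc s)"
  by (simp add: root_lifts_def atLeastAtMostSuc_conv conj_commute)

lemma ex_lincomb_Suc_iff:
  "(\<exists>c0\<in>S. \<exists>c. (\<forall>u\<in>{1..s}. c u \<in> S) \<and> x - c0 * e (Suc s) = (\<Sum>u=1..s. c u * e u)) \<longleftrightarrow>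
   (\<exists>c. (\<forall>u\<in>{1..Suc s}. c u \<in> S) \<and> x = (\<Sum>u=1..Suc s. c u * (e u :: 'a::comm_ring)))"
proof
  assume "\<exists>c0\<in>S. \<exists>c. (\<forall>u\<in>{1..s}. c u \<in> S) \<and> x - c0 * e (Suc s) = (\<Sum>u=1..s. c u * e u)"
  then obtain c0 c where "c0 \<in> S" "\<forall>u\<in>{1..s}. c u \<in> S"
      "x - c0 * e (Suc s) = (\<Sum>u=1..s. c u * e u)"
    by blast
  moreover have "(\<Sum>u=1..s. c u * e u) = (\<Sum>u=1..s. (c(Suc s := c0)) u * e u)"
    by (rule sum.cong) auto
  ultimately show "\<exists>c. (\<forall>u\<in>{1..Suc s}. c u \<in> S) \<and> x = (\<Sum>u=1..Suc s. c u * e u)"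
    by (intro exI[of _ "c(Suc s := c0)"]) (auto simp: algebra_simps le_Suc_eq)
next
  assume "\<exists>c. (\<forall>u\<in>{1..Suc s}. c u \<in> S) \<and> x = (\<Sum>u=1..Suc s. c u * e u)"
  then obtain c where "\<forall>u\<in>{1..Suc s}. c u \<in> S" "x = (\<Sum>u=1..Suc s. c u * e u)"
    by blast
  then show "\<exists>c0\<in>S. \<exists>c. (\<forall>u\<in>{1..s}. c u \<in> S) \<and> x - c0 * e (Suc s) = (\<Sum>u=1..s. c u * e u)"
    by (intro bexI[of _ "c (Suc s)"] exI[of _ c]) auto
qed

context
  fixes q :: nat and a \<mu> e :: "nat \<Rightarrow> 'l::field"
  assumes frob: "frobenius_additive q TYPE('l)"
begin

lemma tw_prod_eval_eq_0_iff_lincomb: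
  assumes "root_lifts q a \<mu> e s"
  shows "tw_prod_eval q a s x = 0 \<longleftrightarrow>
    (\<exists>c. (\<forall>u\<in>{1..s}. c u \<in> Fq q) \<and> x = (\<Sum>u=1..s. c u * e u))"
  using assms
proof (induction s arbitrary: x)
  case 0
  then show ?case by simp
next
  case (Suc s)
  have lifts: "root_lifts q a \<mu> e s" and \<mu>: "\<mu> (Suc s) \<noteq> 0" "\<mu> (Suc s) ^ q = a (Suc s) * \<mu> (Suc s)"
    and e: "tw_prod_eval q a s (e (Suc s)) = \<mu> (Suc s)"
    using Suc.prems(1) by (simp_all add: root_lifts_Suc)
  have "tw_prod_eval q a (Suc s) x = 0 \<longleftrightarrow> (\<exists>c0\<in>Fq q. tw_prod_eval q a s x = c0 * \<mu> (Suc s))"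
    using roots_of_power_eq_mult_self[OF \<mu>] by simp
  also have "\<dots> \<longleftrightarrow> (\<exists>c0\<in>Fq q. tw_prod_eval q a s (x - c0 * e (Suc s)) = 0)"
    by (intro bex_cong refl) (simp add: tw_prod_eval_diff[OF frob] tw_prod_eval_scale e)
  also have "\<dots> \<longleftrightarrow> (\<exists>c0\<in>Fq q. \<exists>c. (\<forall>u\<in>{1..s}. c u \<in> Fq q) \<and>
      x - c0 * e (Suc s) = (\<Sum>u=1..s. c u * e u))"
    using Suc.IH[OF lifts] by simp
  finally show ?case by (simp only: ex_lincomb_Suc_iff)
qed

lemma root_lifts_independent:
  assumes "root_lifts q a \<mu> e s" "\<forall>u\<in>{1..s}. c u \<in> Fq q" "(\<Sum>u=1..s. c u * e u) = 0"
  shows "\<forall>u\<in>{1..s}. c u = 0"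
  using assms
proof (induction s)
  case 0
  then show ?case by simp
next
  case (Suc s)
  have lifts: "root_lifts q a \<mu> e s" and \<mu>: "\<mu> (Suc s) \<noteq> 0"
    and e: "tw_prod_eval q a s (e (Suc s)) = \<mu> (Suc s)"
    using Suc.prems(1) by (simp_all add: root_lifts_Suc)
  have "tw_prod_eval q a s (\<Sum>u=1..s. c u * e u) = 0"
    unfolding tw_prod_eval_eq_0_iff_lincomb[OF lifts] using Suc.prems(2) by (intro exI[of _ c]) auto
  moreover have "tw_prod_eval q a s ((\<Sum>u=1..s. c u * e u) + c (Suc s) * e (Suc s)) = 0"
    using Suc.prems(3) by (simp add: tw_prod_eval_0[OF frob])
  ultimately have "c (Suc s) * \<mu> (Suc s) = 0"
    using Suc.prems(2) by (simp add: tw_prod_eval_add[OF frob] tw_prod_eval_scale e)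
  then have "c (Suc s) = 0" using \<mu> by simp
  moreover have "\<forall>u\<in>{1..s}. c u = 0"
    using Suc.IH[OF lifts] Suc.prems(2,3) \<open>c (Suc s) = 0\<close> by simp
  ultimately show ?case by (auto simp: le_Suc_eq)
qed

end

context
  fixes K :: "'l::field set" and \<sigma> :: "'l \<Rightarrow> 'l"
  assumes subfield: "subfield K" and galois: "\<sigma> \<in> galois_group K"
begin

lemma galois_add: "\<sigma> (x + y) = \<sigma> x + \<sigma> y"
  and galois_mult: "\<sigma> (x * y) = \<sigma> x * \<sigma> y"
  and galois_fixes: "x \<in> K \<Longrightarrow> \<sigma> x = x"
  and galois_inj: "\<sigma> x = \<sigma> y \<Longrightarrow> x = y"
  using galois by (auto simp: galois_group_def bij_def dest: injD)

lemma galois_zero: "\<sigma> 0 = 0"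
  using galois_fixes subfield by (simp add: subfield_def)

lemma galois_diff: "\<sigma> (x - y) = \<sigma> x - \<sigma> y"
  using galois_add[of "x - y" y] by simp

lemma galois_uminus: "\<sigma> (- x) = - \<sigma> x"
  using galois_diff[of 0 x] by (simp add: galois_zero)

lemma galois_power: "\<sigma> (x ^ n) = \<sigma> x ^ n"
  using galois_fixes subfield by (induction n) (auto simp: galois_mult subfield_def)

lemma galois_power_int: "\<sigma> (x powi k) = \<sigma> x powi k"
proof -
  have "\<sigma> (inverse x) = inverse (\<sigma> x)"
  proof (cases "x = 0")
    case False
    then have "\<sigma> x * \<sigma> (inverse x) = \<sigma> 1" by (simp flip: galois_mult)
    then show ?thesis using galois_fixes subfield by (simp add: subfield_def inverse_unique)
  qed (simp add: galois_zero)
  then show ?thesis by (simp add: power_int_def galois_power)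
qed

lemma galois_tw_prod_eval: "(\<And>u. a u \<in> K) \<Longrightarrow> \<sigma> (tw_prod_eval q a s x) = tw_prod_eval q a s (\<sigma> x)"
  by (induction s) (simp_all add: galois_diff galois_power galois_mult galois_fixes)

lemma carlitz_char_on_torsion_point:
  assumes "Fq q \<subseteq> K" "t \<in> K" "L \<noteq> 0" "L ^ q = - t * L"
  shows "carlitz_char t q \<sigma> \<in> Fq q \<and> carlitz_char t q \<sigma> \<noteq> 0 \<and> \<sigma> L = carlitz_char t q \<sigma> * L"
proof -
  have roots: "t * x + x ^ q = 0 \<longleftrightarrow> (\<exists>c\<in>Fq q. x = c * L)" for x
    using roots_of_power_eq_mult_self[OF assms(3,4), of x] by (simp add: eq_neg_iff_add_eq_0 add.commute)
  have "\<sigma> L ^ q = - t * \<sigma> L"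
    using assms(2,4) by (simp add: galois_mult galois_uminus galois_fixes flip: galois_power)
  then have "t * \<sigma> L + \<sigma> L ^ q = 0" by simp
  then obtain w where w: "w \<in> Fq q" "\<sigma> L = w * L" unfolding roots by blast
  have acts: "\<sigma> x = w * x" if x: "t * x + x ^ q = 0" for x
  proof -
    obtain c where c: "c \<in> Fq q" "x = c * L" using x unfolding roots by blast
    then have "\<sigma> c = c" using assms(1) galois_fixes by blast
    then show ?thesis unfolding c(2) using w(2) by (simp add: galois_mult mult.left_commute)
  qed
  have "carlitz_char t q \<sigma> = w"
    unfolding carlitz_char_def
  proof (rule the_equality)
    fix w' assume "w' \<in> Fq q \<and> (\<forall>x. t * x + x ^ q = 0 \<longrightarrow> \<sigma> x = w' * x)"
    then have "\<sigma> L = w' * L" using assms(4) by simp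
    then show "w' = w" using w(2) assms(3) by simp
  qed (use w acts in auto)
  moreover have "w \<noteq> 0"
    using w(2) assms(3) galois_inj[of L 0] by (auto simp: galois_zero)
  ultimately show ?thesis using w by simp
qed

end

section \<open>Upper triangular mod \<open>t\<close> representation\<close>

lemma galois_root_lift_triangular:
  fixes K :: "'l::field set"
  assumes frob: "frobenius_additive q TYPE('l)" and subfield: "subfield K"
    and \<sigma>: "\<sigma> \<in> galois_group K" and aK: "\<And>u. a u \<in> K"
    and lifts: "root_lifts q a \<mu> e (s - 1)" and e: "tw_prod_eval q a (s - 1) (e s) = \<mu> s"
    and W: "W \<in> Fq q" and \<sigma>\<mu>: "\<sigma> (\<mu> s) = W * \<mu> s" and s: "s \<ge> 1"
  shows "\<exists>c. (\<forall>u. c u \<in> Fq q) \<and> \<sigma> (e s) = W * e s + (\<Sum>u\<in>{1..<s}. c u * e u)"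
proof -
  have "tw_prod_eval q a (s - 1) (\<sigma> (e s)) = \<sigma> (\<mu> s)"
    using galois_tw_prod_eval[OF subfield \<sigma>, where a=a, OF aK] e by metis
  then have "tw_prod_eval q a (s - 1) (\<sigma> (e s) - W * e s) = 0"
    using e \<sigma>\<mu> by (simp add: tw_prod_eval_diff[OF frob] tw_prod_eval_scale[OF W])
  then obtain c where c: "\<forall>u\<in>{1..s - 1}. c u \<in> Fq q"
      "\<sigma> (e s) - W * e s = (\<Sum>u=1..s - 1. c u * e u)"
    using tw_prod_eval_eq_0_iff_lincomb[OF frob lifts] by blast
  define c' where "c' u = (if u \<in> {1..<s} then c u else 0)" for u
  have "(\<Sum>u\<in>{1..<s}. c' u * e u) = (\<Sum>u=1..s - 1. c u * e u)"
    using s by (intro sum.cong) (auto simp: c'_def)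
  moreover have "\<forall>u. c' u \<in> Fq q" using c(1) Fq_zero[OF frob] by (auto simp: c'_def)
  ultimately show ?thesis using c(2) by (intro exI[of _ c']) (simp add: algebra_simps)
qed

lemma upper_tri_rep_scaled_tw_prod:
  fixes K :: "'l::field set"
  assumes frob: "frobenius_additive q TYPE('l)" and closed: "alg_closed TYPE('l)"
    and subfield: "subfield K" and aK: "\<And>u. a u \<in> K"
    and phi: "\<And>n. phi n = b * tw_prod q a r n" and "b \<noteq> 0"
    and \<mu>: "\<And>u. \<mu> u \<noteq> 0" "\<And>u. \<mu> u ^ q = a u * \<mu> u"
    and char: "\<And>\<sigma>. \<sigma> \<in> galois_group K \<Longrightarrow> carlitz_char t q \<sigma> \<in> Fq q"
    and galois: "\<And>\<sigma> s. \<sigma> \<in> galois_group K \<Longrightarrow> s \<in> {1..r} \<Longrightarrow>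
                   \<sigma> (\<mu> s) = carlitz_char t q \<sigma> powi d s * \<mu> s"
  shows "upper_tri_rep K t q r phi d"
proof -
  have q: "q > 1" using frob by (simp add: frobenius_additive_def)
  have "\<forall>u. \<exists>x. tw_prod_eval q a (u - 1) x = \<mu> u"
    using tw_prod_eval_surj[OF closed q] by blast
  then obtain e where e: "\<And>u. tw_prod_eval q a (u - 1) (e u) = \<mu> u" by metis
  have lifts: "root_lifts q a \<mu> e s" for s using e \<mu> by (simp add: root_lifts_def)
  have torsion: "x \<in> torsion q r phi \<longleftrightarrow> tw_prod_eval q a r x = 0" for x
    using sum_tw_prod_eq_tw_prod_eval[OF frob, of r r a x] \<open>b \<noteq> 0\<close>
    by (simp add: torsion_def phi mult.assoc flip: sum_distrib_left)
  show ?thesis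
    unfolding upper_tri_rep_def
  proof (rule exI[of _ e], intro conjI allI impI ballI)
    show "x \<in> torsion q r phi \<longleftrightarrow> (\<exists>c. (\<forall>u\<in>{1..r}. c u \<in> Fq q) \<and> x = (\<Sum>u=1..r. c u * e u))"
      for x using torsion tw_prod_eval_eq_0_iff_lincomb[OF frob lifts] by simp
  next
    fix c u assume "(\<forall>u\<in>{1..r}. c u \<in> Fq q) \<and> (\<Sum>u=1..r. c u * e u) = 0" "u \<in> {1..r}"
    then show "c u = 0" using root_lifts_independent[OF frob lifts] by blast
  next
    fix \<sigma> s assume \<sigma>: "\<sigma> \<in> galois_group K" and s: "s \<in> {1..r}"
    show "\<exists>c. (\<forall>u. c u \<in> Fq q) \<and>
        \<sigma> (e s) = carlitz_char t q \<sigma> powi d s * e s + (\<Sum>u\<in>{1..<s}. c u * e u)"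
      using s by (intro galois_root_lift_triangular[OF frob subfield \<sigma> aK lifts e
          Fq_power_int[OF char[OF \<sigma>]] galois[OF \<sigma> s]]) auto
  qed
qed

lemma carlitz_monomial_power:
  assumes "L ^ (q - 1) = - t" "L \<noteq> 0" "t \<noteq> 0" "q \<ge> 1"
  shows "(L powi i * (- t) powi m) ^ q =
    (- t) powi (i + m * (int q - 1)) * (L powi i * (- t) powi m :: 'l::field)"
proof -
  have "(L powi i * (- t) powi m) ^ (q - 1) = (L ^ (q - 1)) powi i * (- t) powi (m * int (q - 1))"
    by (simp add: power_mult_distrib power_int_power' power_int_power mult.commute)
  also have "\<dots> = (- t) powi (i + m * (int q - 1))"
    using assms by (simp add: power_int_add)
  finally show ?thesis using power_eq_power_pred_mult[OF assms(4)] by metis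
qed

lemma galois_carlitz_monomial:
  fixes K :: "'l::field set"
  assumes subfield: "subfield K" and \<sigma>: "\<sigma> \<in> galois_group K" and "Fq q \<subseteq> K" "t \<in> K"
    and "L \<noteq> 0" "L ^ q = - t * L" "q > 1" "int q - 1 dvd d - i"
  shows "\<sigma> (L powi i * (- t) powi m) = carlitz_char t q \<sigma> powi d * (L powi i * (- t) powi m)"
proof -
  note \<chi> = carlitz_char_on_torsion_point[OF subfield \<sigma> assms(3-6)]
  have "carlitz_char t q \<sigma> ^ (q - 1) = 1"
    using \<chi> assms(7) by (intro Fq_power_pred) auto
  moreover have "int (q - 1) dvd d - i" using assms(7,8) by simp
  ultimately have "carlitz_char t q \<sigma> powi d = carlitz_char t q \<sigma> powi i"
    using \<chi> by (intro power_int_eq_if_dvd_diff) auto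
  moreover have "\<sigma> (- t) = - t"
    using galois_fixes[OF subfield \<sigma>] ring_closedD(5)[OF subfield_ring_closed[OF subfield]] assms(4)
    by blast
  ultimately show ?thesis
    using \<chi> by (simp add: galois_mult[OF subfield \<sigma>] galois_power_int[OF subfield \<sigma>]
        power_int_mult_distrib)
qed

lemma upper_tri_rep_phi_m:
  fixes K :: "'l::field set"
  assumes setting: "function_field_setting K t p q"
    and congruent: "\<forall>s\<in>{1..r}. int q - 1 dvd d s - i s"
  shows "upper_tri_rep K t q r (phi_m q t r i m) d"
proof -
  have frob: "frobenius_additive q TYPE('l)" and q: "q > 1" and t: "t \<noteq> 0"
    using function_field_setting_frobenius_additive[OF setting]
      function_field_setting_q_gt_1[OF setting] function_field_setting_t_nonzero[OF setting] .
  have closed: "alg_closed TYPE('l)" and subfield: "subfield K" and FqK: "Fq q \<subseteq> K"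
    and tK: "t \<in> K"
    using setting by (auto simp: function_field_setting_def)
  have mtK: "- t \<in> K" using ring_closedD(5)[OF subfield_ring_closed[OF subfield] tK] .
  obtain L where L: "L ^ (q - 1) = poly [:- t:] L"
    using alg_closed_ex_power_eq_poly[OF closed, of "[:- t:]" "q - 1"] q by auto
  have L0: "L \<noteq> 0" using L t q by (auto simp: power_0_left)
  have Lq: "L ^ q = - t * L" using L power_eq_power_pred_mult[of q L] q by simp
  define a where "a u = (- t) powi (i u + m u * (int q - 1))" for u
  define \<mu> where "\<mu> u = L powi i u * (- t) powi m u" for u
  show ?thesis
  proof (rule upper_tri_rep_scaled_tw_prod[OF frob closed subfield])
    show "a u \<in> K" for u unfolding a_def using subfield mtK by (rule subfield_power_int)
    show "phi_m q t r i m n = (-1) ^ (r - 1) * tw_prod q a r n" for n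
      by (simp add: phi_m_def a_def[abs_def])
    show "\<mu> u \<noteq> 0" for u using L0 t by (simp add: \<mu>_def power_int_not_zero)
    show "\<mu> u ^ q = a u * \<mu> u" for u
      unfolding \<mu>_def a_def using L L0 t q by (intro carlitz_monomial_power) auto
    show "carlitz_char t q \<sigma> \<in> Fq q" if "\<sigma> \<in> galois_group K" for \<sigma>
      using carlitz_char_on_torsion_point[OF subfield that FqK tK L0 Lq] by blast
  qed (use galois_carlitz_monomial[OF subfield _ FqK tK L0 Lq] q congruent in \<open>auto simp: \<mu>_def\<close>)
qed

section \<open>Good reduction away from \<open>t\<close>\<close>

context
  fixes K :: "'l::field set" and v :: "'l \<Rightarrow> int"
  assumes val: "discrete_val K v" and subfield: "subfield K"
begin

lemma discrete_val_mult: "x \<in> K \<Longrightarrow> y \<in> K \<Longrightarrow> x \<noteq> 0 \<Longrightarrow> y \<noteq> 0 \<Longrightarrow> v (x * y) = v x + v y"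
  using val by (simp add: discrete_val_def)

lemma discrete_val_add:
  "x \<in> K \<Longrightarrow> y \<in> K \<Longrightarrow> x \<noteq> 0 \<Longrightarrow> y \<noteq> 0 \<Longrightarrow> x + y \<noteq> 0 \<Longrightarrow> min (v x) (v y) \<le> v (x + y)"
  using val by (simp add: discrete_val_def)

lemma discrete_val_one: "v 1 = 0"
  using discrete_val_mult[of 1 1] subfield by (simp add: subfield_def)

lemma discrete_val_minus_one: "v (-1) = 0"
  using discrete_val_mult[of "-1" "-1"] discrete_val_one
    ring_closedD(2,5)[OF subfield_ring_closed[OF subfield]] by simp

lemma discrete_val_power: "x \<in> K \<Longrightarrow> x \<noteq> 0 \<Longrightarrow> v (x ^ n) = int n * v x"
  by (induction n)
    (simp_all add: discrete_val_one discrete_val_mult ring_closed_power[OF subfield_ring_closed[OF subfield]]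
      algebra_simps)

lemma discrete_val_power_int:
  assumes "x \<in> K" "x \<noteq> 0"
  shows "v (x powi k) = k * v x"
proof -
  have "inverse x \<in> K" using assms subfield by (simp add: subfield_def)
  moreover have "v (inverse x) = - v x"
    using discrete_val_mult[OF assms(1) \<open>inverse x \<in> K\<close>] assms discrete_val_one by simp
  ultimately show ?thesis
    using assms by (simp add: power_int_def discrete_val_power)
qed

lemma ring_closed_integral_at: "ring_closed {x \<in> K. integral_at v x}"
proof -
  note K = ring_closedD[OF subfield_ring_closed[OF subfield]]
  have add: "integral_at v (x + y)" if "x \<in> K" "y \<in> K" "integral_at v x" "integral_at v y" for x y
    using that discrete_val_add[of x y] by (cases "x = 0 \<or> y = 0 \<or> x + y = 0")
      (auto simp: integral_at_def)
  have mult: "integral_at v (x * y)" if "x \<in> K" "y \<in> K" "integral_at v x" "integral_at v y" for x y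
    using that discrete_val_mult[of x y] by (cases "x = 0 \<or> y = 0") (auto simp: integral_at_def)
  have "integral_at v (- x)" if "x \<in> K" "integral_at v x" for x
    using mult[of "-1" x] that K discrete_val_minus_one by (simp add: integral_at_def)
  then show ?thesis
    using add mult K discrete_val_one by (auto simp: ring_closed_def integral_at_def)
qed

lemma good_reduction_scaled_tw_prod:
  assumes "q > 0" and a: "\<And>u. a u \<in> K" "\<And>u. integral_at v (a u)"
    and phi: "\<And>n. phi n = b * tw_prod q a r n" and "b \<in> K" "unit_at v b"
  shows "good_reduction K q r phi v"
proof -
  note O = ring_closedD[OF ring_closed_integral_at]
  have "phi j \<in> {x \<in> K. integral_at v x}" for j
    unfolding phi using assms a
    by (intro O(4) tw_prod_coeff_in_ring_closed[OF ring_closed_integral_at])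
      (auto simp: unit_at_def integral_at_def)
  moreover have "phi r = b" using tw_prod_coeff_top[OF \<open>q > 0\<close>, of a r] by (simp add: phi)
  ultimately show ?thesis
    unfolding good_reduction_def using assms O(2) by (intro bexI[of _ 1]) auto
qed

end

lemma D1_phi_m:
  fixes K :: "'l::field set"
  assumes subfield: "subfield K" and "t \<in> K" "t \<noteq> 0" "q > 0"
  shows "D1 K t q r (phi_m q t r i m)"
  unfolding D1_def
proof (intro allI impI)
  fix v assume "finite_place K t v \<and> \<not> above_t t v"
  then have val: "discrete_val K v" and "v t = 0"
    by (auto simp: finite_place_def above_t_def)
  note K = ring_closedD[OF subfield_ring_closed[OF subfield]]
  have "v (- t) = 0"
    using discrete_val_mult[OF val subfield, of "-1" t] discrete_val_minus_one[OF val subfield]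
      assms K \<open>v t = 0\<close> by simp
  then have "integral_at v ((- t) powi k)" for k
    using discrete_val_power_int[OF val subfield, of "- t" k] assms K by (simp add: integral_at_def)
  moreover have "unit_at v ((-1) ^ (r - 1))"
    using discrete_val_power[OF val subfield, of "-1"] discrete_val_minus_one[OF val subfield] K
    by (simp add: unit_at_def)
  ultimately show "good_reduction K q r (phi_m q t r i m) v"
    using assms K ring_closed_power[OF subfield_ring_closed[OF subfield]]
    by (intro good_reduction_scaled_tw_prod[OF val subfield, where a="\<lambda>u. (- t) powi (i u + m u * (int q - 1))"])
      (auto simp: phi_m_def intro: subfield_power_int)
qed

lemma phi_m_coeff_0:
  fixes t :: "'l::field"
  assumes "t \<noteq> 0" "r \<ge> 1" "(\<Sum>s=1..r. i s) = 1" "(\<Sum>s=1..r. m s) = 0"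
  shows "phi_m q t r i m 0 = t"
proof -
  have "(\<Sum>u=1..r. i u + m u * (int q - 1)) = 1"
    using assms(3,4) by (simp add: sum.distrib flip: sum_distrib_right)
  then have prod: "(\<Prod>u=1..r. (- t) powi (i u + m u * (int q - 1))) = - t"
    using assms(1) by (simp add: prod_power_int)
  have sign: "(-1::'l) ^ (r - 1) * (-1) ^ r = -1"
    using assms(2) by (simp flip: power_add)
  have "phi_m q t r i m 0 =
      ((-1) ^ (r - 1) * (-1) ^ r) * (\<Prod>u=1..r. (- t) powi (i u + m u * (int q - 1)))"
    by (simp add: phi_m_def tw_prod_coeff_0 prod_uminus mult.assoc)
  then show ?thesis unfolding prod sign by simp
qed

lemma drinfeld_module_phi_m:
  fixes K :: "'l::field set"
  assumes subfield: "subfield K" and tK: "t \<in> K" and q: "q > 0" and "phi_m q t r i m 0 = t"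
  shows "drinfeld_module K t r (phi_m q t r i m)"
proof -
  note K = ring_closedD[OF subfield_ring_closed[OF subfield]]
  have "(- t) powi k \<in> K" for k
    using subfield_power_int[OF subfield K(5)[OF tK]] .
  then have "tw_prod q (\<lambda>u. (- t) powi (i u + m u * (int q - 1))) r j \<in> K" for j
    by (intro tw_prod_coeff_in_ring_closed[OF subfield_ring_closed[OF subfield]])
  moreover have "(-1) ^ (r - 1) \<in> K"
    using ring_closed_power[OF subfield_ring_closed[OF subfield] K(5)[OF K(2)]] .
  ultimately have "phi_m q t r i m j \<in> K" for j
    unfolding phi_m_def by (intro K(4))
  then show ?thesis
    using assms(4)
    by (simp add: drinfeld_module_def phi_m_def tw_prod_coeff_top[OF q] tw_prod_coeff_above[OF q])
qed

lemma D2_phi_m: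
  fixes K :: "'l::field set"
  assumes setting: "function_field_setting K t p q"
  shows "D2 K t q r (phi_m q t r i m)"
  unfolding D2_def
proof (intro exI conjI)
  have q: "q > 1" using function_field_setting_q_gt_1[OF setting] .
  let ?j = "\<lambda>s. nat (i s mod (int q - 1))"
  show "\<forall>s\<in>{1..r}. ?j s \<le> q - 1"
  proof
    fix s
    have "i s mod (int q - 1) < int q - 1" using q pos_mod_bound[of "int q - 1" "i s"] by linarith
    moreover have "int (q - 1) = int q - 1" using q by simp
    ultimately show "?j s \<le> q - 1" unfolding nat_le_iff by linarith
  qed
  have "int (?j s) - i s = - ((int q - 1) * (i s div (int q - 1)))" for s
    using q minus_mod_eq_mult_div[of "i s" "int q - 1"] by simp
  then show "upper_tri_rep K t q r (phi_m q t r i m) (\<lambda>s. int (?j s))"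
    by (intro upper_tri_rep_phi_m[OF setting]) simp
qed

theorem proposition5p14:
  fixes K :: "'l::field set" and t :: 'l and p q r :: nat and i m :: "nat \<Rightarrow> int"
  assumes "function_field_setting K t p q"
    and "r \<ge> 1"
    and "(\<Sum>s=1..r. i s) = 1"
    and "(\<Sum>s=1..r. m s) = 0"
  shows "drinfeld_module K t r (phi_m q t r i m) \<and>
         in_D K t q r (phi_m q t r i m) \<and>
         upper_tri_rep K t q r (phi_m q t r i m) i"
proof -
  have subfield: "subfield K" and tK: "t \<in> K"
    using assms(1) by (auto simp: function_field_setting_def)
  have q: "q > 0" using function_field_setting_q_gt_1[OF assms(1)] by simp
  have t: "t \<noteq> 0" using function_field_setting_t_nonzero[OF assms(1)] .
  have "drinfeld_module K t r (phi_m q t r i m)"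
    using drinfeld_module_phi_m[OF subfield tK q phi_m_coeff_0[OF t assms(2-4)]] .
  moreover have "D1 K t q r (phi_m q t r i m)" using D1_phi_m[OF subfield tK t q] .
  moreover have "D2 K t q r (phi_m q t r i m)" using D2_phi_m[OF assms(1)] .
  moreover have "upper_tri_rep K t q r (phi_m q t r i m) i"
    by (rule upper_tri_rep_phi_m[OF assms(1)]) simp
  ultimately show ?thesis by (simp add: in_D_def)
qed

end
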